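(* Let $\odot$ be a pseudo-multiplication on $[0,\infty]$ with left identity $1_{\odot}$. Then $\odot$ is non-degenerate (i.e. $O(1_{\odot})=0$) if and only if the monoid $([0,1_{\odot}],\odot)$ is commutative.
   Context: A pseudo-multiplication is a binary operation $\odot:[0,\infty]\times[0,\infty]\to[0,\infty]$ such that: $\odot$ is associative; $\odot$ is continuous on $(0,\infty)\times[0,\infty]$; for every $t$, the map $s\mapsto s\odot t$ is continuous on $(0,\infty]$; $\odot$ is nondecreasing in each argument; there is a left identity element $1_{\odot}$, i.e. $1_{\odot}\odot t=t$ for all $t$; there are no zero divisors, i.e. $s\odot t=0$ implies $s=0$ or $t=0$; and $0$ is an annihilator, i.e. $0\odot t=t\odot 0=0$ for all $t$. For $t\in[0,\infty]$ put $O(t)=\inf_{s>0} s\odot t$. The pseudo-multiplication $\odot$ is called non-degenerate if $O(1_{\odot})=0$. *)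

theory Defs
  imports "HOL-Analysis.Analysis" "HOL-Library.Extended_Nonnegative_Real"
begin

definition pseudo_mult :: "(ennreal \<Rightarrow> ennreal \<Rightarrow> ennreal) \<Rightarrow> ennreal \<Rightarrow> bool" where
  "pseudo_mult f e \<longleftrightarrow>
     (\<forall>a b c. f (f a b) c = f a (f b c)) \<and>
     continuous_on ({0<..<\<infinity>} \<times> UNIV) (\<lambda>(s, t). f s t) \<and>
     (\<forall>t. continuous_on {0<..} (\<lambda>s. f s t)) \<and>
     (\<forall>a b c d. a \<le> b \<longrightarrow> c \<le> d \<longrightarrow> f a c \<le> f b d) \<and>
     (\<forall>t. f e t = t) \<and>
     (\<forall>s t. f s t = 0 \<longrightarrow> s = 0 \<or> t = 0) \<and>
     (\<forall>t. f 0 t = 0 \<and> f t 0 = 0)"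

definition pm_O :: "(ennreal \<Rightarrow> ennreal \<Rightarrow> ennreal) \<Rightarrow> ennreal \<Rightarrow> ennreal" where
  "pm_O f t = (INF s\<in>{0<..}. f s t)"

definition non_degenerate :: "(ennreal \<Rightarrow> ennreal \<Rightarrow> ennreal) \<Rightarrow> ennreal \<Rightarrow> bool" where
  "non_degenerate f e \<longleftrightarrow> pm_O f e = 0"

end

theory Submission
  imports Defs
begin

text \<open>
  If \<open>\<odot>\<close> commutes on \<open>[0, 1\<^sub>\<odot>]\<close>, then \<open>O(1\<^sub>\<odot>) \<le> s \<odot> 1\<^sub>\<odot> = 1\<^sub>\<odot> \<odot> s = s\<close> for all
  small \<open>s > 0\<close>.

  Conversely, non-degeneracy and the intermediate value theorem make \<open>1\<^sub>\<odot>\<close> a two-sided identity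
  on \<open>[0, 1\<^sub>\<odot>]\<close>; hence \<open>x \<odot> y \<le> min x y\<close> there and \<open>\<odot>\<close> is jointly continuous on
  \<open>[0, 1\<^sub>\<odot>]\<^sup>2\<close>. Given \<open>x \<le> y \<le> 1\<^sub>\<odot>\<close>, let \<open>b\<close> be the least idempotent in \<open>[x, 1\<^sub>\<odot>]\<close>.
  If \<open>b \<le> y\<close>, both \<open>x \<odot> y\<close> and \<open>y \<odot> x\<close> equal \<open>x\<close>. Otherwise the powers of any \<open>a < b\<close>
  decrease to an idempotent below \<open>a\<close> and so eventually drop below \<open>x\<close>; hence the
  \<open>(n + 1)\<close>-th roots \<open>r\<^sub>n \<in> [x, b]\<close> of \<open>x\<close> tend to \<open>b\<close>. For every \<open>n\<close> some power \<open>z\<close> of \<open>r\<^sub>n\<close>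
  satisfies \<open>z \<odot> r\<^sub>n \<le> x \<odot> y, y \<odot> x \<le> z\<close>, while \<open>\<odot> r\<^sub>n\<close> tends to \<open>\<odot> b\<close>, the identity
  on \<open>[0, b]\<close>, which contains both products. So the products coincide.
\<close>

primrec pm_power :: "(ennreal \<Rightarrow> ennreal \<Rightarrow> ennreal) \<Rightarrow> ennreal \<Rightarrow> ennreal \<Rightarrow> nat \<Rightarrow> ennreal"
  where
    "pm_power f e z 0 = e"
  | "pm_power f e z (Suc n) = f z (pm_power f e z n)"

locale pseudo_multiplication =
  fixes f :: "ennreal \<Rightarrow> ennreal \<Rightarrow> ennreal" and e :: ennreal
  assumes pseudo_mult: "pseudo_mult f e"
begin

lemma assoc: "f (f a b) c = f a (f b c)"
  using pseudo_mult unfolding pseudo_mult_def by (elim conjE) (erule allE)+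

lemma mono: "a \<le> b \<Longrightarrow> c \<le> d \<Longrightarrow> f a c \<le> f b d"
  using pseudo_mult unfolding pseudo_mult_def by (elim conjE) auto

lemma left_unit [simp]: "f e t = t"
  using pseudo_mult unfolding pseudo_mult_def by (elim conjE) (erule allE)

lemma zero_left [simp]: "f 0 t = 0" and zero_right [simp]: "f t 0 = 0"
  using pseudo_mult unfolding pseudo_mult_def by (elim conjE; auto)+

lemma continuous_on_positive_finite: "continuous_on ({0<..<\<infinity>} \<times> UNIV) (\<lambda>(s, t). f s t)"
  using pseudo_mult unfolding pseudo_mult_def by (elim conjE)

lemma continuous_on_left: "continuous_on {0<..} (\<lambda>s. f s t)"
  using pseudo_mult unfolding pseudo_mult_def by (elim conjE) (erule allE)

lemma unit_pos: "0 < e"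
proof (rule ccontr)
  assume "\<not> 0 < e"
  then have "f e 1 = 0" by simp
  then show False by simp
qed

lemma mult_le_right: "s \<le> e \<Longrightarrow> f s t \<le> t"
  using mono[of s e t t] by simp

lemma non_degenerate_if_commutative:
  assumes comm: "\<forall>a\<in>{0..e}. \<forall>b\<in>{0..e}. f a b = f b a"
  shows "pm_O f e = 0"
proof -
  have below: "pm_O f e \<le> s" if "0 < s" "s \<le> e" for s
  proof -
    have "pm_O f e \<le> f s e"
      unfolding pm_O_def using that by (intro INF_lower) simp
    also have "f s e = s"
      using comm that by force
    finally show ?thesis .
  qed
  have "pm_O f e \<le> min y e" if "0 < y" for y
    using that unit_pos by (intro below) auto
  then show ?thesis
    by (metis dense_ge le_zero_eq min.boundedE)
qed

end

locale nondegenerate_pseudo_multiplication = pseudo_multiplication +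
  assumes non_degenerate: "pm_O f e = 0"
begin

lemma right_unit: assumes "t \<le> e" shows "f t e = t"
proof (cases "t = 0")
  case False
  then have "(INF s\<in>{0<..}. f s e) < t"
    using non_degenerate unfolding pm_O_def by (simp add: zero_less_iff_neq_zero)
  then obtain s0 where s0: "0 < s0" "f s0 e < t"
    by (auto simp: INF_less_iff)
  have "s0 \<le> e"
  proof (rule ccontr)
    assume "\<not> s0 \<le> e"
    then have "f e e \<le> f s0 e" by (intro mono) auto
    then show False using s0 assms by simp
  qed
  \<comment> \<open>Non-degeneracy makes \<open>t\<close> a value of \<open>s \<mapsto> f s e\<close>, and every such value is fixed by \<open>f _ e\<close>.\<close>
  moreover have "continuous_on {s0..e} (\<lambda>s. f s e)"
    using s0 by (intro continuous_on_subset[OF continuous_on_left]) auto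
  ultimately obtain u where "f u e = t"
    using IVT'[of "\<lambda>s. f s e" s0 t e] s0 assms by (auto intro: less_imp_le)
  then show ?thesis
    using assoc[of u e e] by simp
qed simp

lemma mult_le_left: "s \<le> e \<Longrightarrow> t \<le> e \<Longrightarrow> f s t \<le> s"
  using mono[of s s t e] right_unit[of s] by simp

lemma mult_le_unit: "s \<le> e \<Longrightarrow> t \<le> e \<Longrightarrow> f s t \<le> e"
  using mult_le_right[of s t] by simp

lemma tendsto_left_zero:
  assumes "t \<le> e"
  shows "((\<lambda>(s, t). f s t) \<longlongrightarrow> 0) (at (0, t) within {..e} \<times> {..e})"
proof (rule tendsto_sandwich[OF _ _ tendsto_const])
  show "((\<lambda>p. fst p) \<longlongrightarrow> 0) (at (0, t) within {..e} \<times> {..e})"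
    using tendsto_fst[OF tendsto_ident_at, of "(0, t)"] by simp
  have "\<forall>\<^sub>F p in at (0, t) within {..e} \<times> {..e}. p \<in> {..e} \<times> {..e}"
    by (simp add: eventually_at_filter)
  then show "\<forall>\<^sub>F p in at (0, t) within {..e} \<times> {..e}. (\<lambda>(s, t). f s t) p \<le> fst p"
    by eventually_elim (auto intro: mult_le_left)
qed simp

lemma tendsto_left_top:
  assumes "e = \<infinity>"
  shows "((\<lambda>(s, t). f s t) \<longlongrightarrow> t) (at (\<infinity>, t))"
proof -
  have snd_t: "((\<lambda>p. snd p) \<longlongrightarrow> t) (at (\<infinity>, t))"
    using tendsto_snd[OF tendsto_ident_at, of "(\<infinity>, t)" UNIV] by simp
  have fst_top: "((\<lambda>p. fst p) \<longlongrightarrow> \<infinity>) (at (\<infinity>, t))"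
    using tendsto_fst[OF tendsto_ident_at, of "(\<infinity>, t)" UNIV] by simp
  show ?thesis
  proof (rule order_tendstoI)
    fix a
    assume "t < a"
    with snd_t have "\<forall>\<^sub>F p in at (\<infinity>, t). snd p < a"
      by (rule order_tendstoD(2))
    then show "\<forall>\<^sub>F p in at (\<infinity>, t). (\<lambda>(s, t). f s t) p < a"
      by eventually_elim (use assms in \<open>auto intro: le_less_trans[OF mult_le_right]\<close>)
  next
    fix a
    assume "a < t"
    \<comment> \<open>Bound \<open>f s t'\<close> from below by \<open>f c t'\<close> for a finite \<open>c\<close> with \<open>a < f c t\<close>, which exists
      because \<open>f n t \<longrightarrow> f \<infinity> t = t\<close>.\<close>
    moreover have "(\<lambda>n. f (of_nat n) t) \<longlonglongrightarrow> t"
      using continuous_on_tendsto_compose[OF continuous_on_left of_nat_tendsto_top_ennreal, of t]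
        assms left_unit[of t]
      by simp
    ultimately have "\<forall>\<^sub>F n in sequentially. a < f (of_nat n) t"
      by (rule order_tendstoD(1)[rotated])
    then obtain N where "\<And>n. N \<le> n \<Longrightarrow> a < f (of_nat n) t"
      unfolding eventually_sequentially by blast
    then have n: "a < f (of_nat (Suc N)) t"
      using le_SucI by blast
    define c where "c = (of_nat (Suc N) :: ennreal)"
    have c: "0 < c" "c < \<infinity>"
      by (auto simp: c_def of_nat_less_top add_pos_nonneg)
    have "continuous_on UNIV (\<lambda>u. (\<lambda>(s, t). f s t) (c, u))"
      by (rule continuous_on_compose2[OF continuous_on_positive_finite])
        (use c in \<open>auto intro!: continuous_intros\<close>)
    then have "isCont (f c) t"
      by (simp add: continuous_on_eq_continuous_at)
    then have "((\<lambda>p. f c (snd p)) \<longlongrightarrow> f c t) (at (\<infinity>, t))"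
      by (rule isCont_tendsto_compose[OF _ snd_t])
    then have "\<forall>\<^sub>F p in at (\<infinity>, t). a < f c (snd p)"
      using n order_tendstoD(1) unfolding c_def by blast
    moreover have "\<forall>\<^sub>F p in at (\<infinity>, t). c < fst p"
      using order_tendstoD(1)[OF fst_top c(2)] .
    ultimately show "\<forall>\<^sub>F p in at (\<infinity>, t). a < (\<lambda>(s, t). f s t) p"
    proof eventually_elim
      case (elim p)
      then have "f c (snd p) \<le> f (fst p) (snd p)"
        by (intro mono) auto
      with elim show ?case
        by (simp add: case_prod_beta)
    qed
  qed
qed

lemma continuous_on_square: "continuous_on ({..e} \<times> {..e}) (\<lambda>(s, t). f s t)"
  unfolding continuous_on_def
proof (intro ballI)
  fix p
  assume "p \<in> {..e} \<times> {..e}"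
  then obtain s t where p: "p = (s, t)" and st: "s \<le> e" "t \<le> e"
    by auto
  consider "s = 0" | "0 < s" "s < \<infinity>" | "s = \<infinity>"
    using less_top[of s] by (auto simp: zero_less_iff_neq_zero)
  then show "((\<lambda>(s, t). f s t) \<longlongrightarrow> (\<lambda>(s, t). f s t) p) (at p within {..e} \<times> {..e})"
  proof cases
    case 1
    then show ?thesis
      using tendsto_left_zero[OF st(2)] p by simp
  next
    case 2
    have "open ({0<..<\<infinity>::ennreal} \<times> (UNIV :: ennreal set))"
      by (intro open_Times open_greaterThanLessThan open_UNIV)
    with 2 have "isCont (\<lambda>(s, t). f s t) (s, t)"
      using continuous_on_positive_finite continuous_on_eq_continuous_at by fastforce
    then have "continuous (at (s, t) within {..e} \<times> {..e}) (\<lambda>(s, t). f s t)"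
      by (rule continuous_at_imp_continuous_at_within)
    then show ?thesis
      by (simp add: p continuous_within)
  next
    case 3
    with st(1) have "e = \<infinity>"
      by (simp add: top_unique)
    then have "((\<lambda>(s, t). f s t) \<longlongrightarrow> t) (at (s, t) within {..e} \<times> {..e})"
      using tendsto_within_subset[OF tendsto_left_top] 3 by blast
    then show ?thesis
      using 3 \<open>e = \<infinity>\<close> p by (metis case_prod_conv left_unit)
  qed
qed

lemma continuous_on_mult:
  assumes "continuous_on A g" "continuous_on A h"
    and "\<And>x. x \<in> A \<Longrightarrow> g x \<le> e" "\<And>x. x \<in> A \<Longrightarrow> h x \<le> e"
  shows "continuous_on A (\<lambda>x. f (g x) (h x))"
  using continuous_on_compose2[OF continuous_on_square continuous_on_Pair[OF assms(1,2)]] assms(3,4)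
  by auto

abbreviation pow :: "ennreal \<Rightarrow> nat \<Rightarrow> ennreal" where
  "pow \<equiv> pm_power f e"

lemma pow_le_unit: "z \<le> e \<Longrightarrow> pow z n \<le> e"
  by (induction n) (auto intro: mult_le_unit)

lemma pow_add: "pow z (m + n) = f (pow z m) (pow z n)"
  by (induction m) (auto simp: assoc)

lemma pow_one: "z \<le> e \<Longrightarrow> pow z 1 = z"
  by (simp add: right_unit)

lemma pow_Suc_right: "z \<le> e \<Longrightarrow> pow z (Suc n) = f (pow z n) z"
  using pow_add[of z n 1] pow_one[of z] by simp

lemma pow_commute: "f (pow z m) (pow z n) = f (pow z n) (pow z m)"
  by (metis add.commute pow_add)

lemma pow_antimono:
  assumes "z \<le> e" "m \<le> n"
  shows "pow z n \<le> pow z m"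
  using assms(2)
proof (induction n rule: dec_induct)
  case (step n)
  then show ?case
    using mult_le_right[OF assms(1), of "pow z n"] by simp
qed simp

lemma pow_mono: "z \<le> w \<Longrightarrow> pow z n \<le> pow w n"
  by (induction n) (auto intro: mono)

lemma continuous_on_pow: "continuous_on {..e} (\<lambda>z. pow z n)"
  by (induction n) (auto intro!: continuous_on_mult continuous_intros pow_le_unit)

lemma pow_idempotent: "i \<le> e \<Longrightarrow> f i i = i \<Longrightarrow> pow i (Suc n) = i"
  by (induction n) (auto simp: right_unit)

lemma idempotent_absorbs_below:
  assumes i: "i \<le> e" "f i i = i" and "y \<le> i"
  shows "f i y = y" "f y i = y"
proof -
  have "{0..e} = {..e}"
    by auto
  then have left: "continuous_on {0..e} (\<lambda>t. f i t)" and right: "continuous_on {0..e} (\<lambda>s. f s i)"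
    using i(1) by (auto intro!: continuous_on_mult continuous_intros)
  obtain u where "f i u = y"
    using IVT'[OF _ _ _ left, of y] i \<open>y \<le> i\<close> by (auto simp: right_unit)
  then show "f i y = y"
    using assoc[of i i u] i by simp
  obtain v where "f v i = y"
    using IVT'[OF _ _ _ right, of y] i \<open>y \<le> i\<close> by auto
  then show "f y i = y"
    using assoc[of v i i] i by simp
qed

lemma idempotent_absorbs_above:
  assumes i: "i \<le> e" "f i i = i" and y: "i \<le> y" "y \<le> e"
  shows "f i y = i" "f y i = i"
proof -
  have "f i i \<le> f i y" "f i y \<le> f i e" "f i i \<le> f y i" "f y i \<le> f e i"
    using mono[OF order_refl y(1)] mono[OF order_refl y(2)] mono[OF y(1) order_refl]
      mono[OF y(2) order_refl] by blast+
  then show "f i y = i" "f y i = i"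
    using i by (auto simp: right_unit intro: antisym)
qed

lemma mult_through_idempotent:
  assumes "x \<le> b" "b \<le> y" "y \<le> e" "f b b = b"
  shows "f x y = x" "f y x = x"
proof -
  have "b \<le> e"
    using assms by simp
  then have "f x b = x" "f b x = x" "f b y = b" "f y b = b"
    using idempotent_absorbs_below[of b x] idempotent_absorbs_above[of b y] assms by auto
  then show "f x y = x" "f y x = x"
    using assoc[of x b y] assoc[of y b x] by simp_all
qed

lemma idempotent_INF_pow:
  assumes "a \<le> e"
  shows "f (INF m. pow a m) (INF m. pow a m) = (INF m. pow a m)"
proof -
  define M where "M = (INF m. pow a m)"
  have lim: "(\<lambda>m. pow a m) \<longlonglongrightarrow> M"
    unfolding M_def by (rule LIMSEQ_INF) (simp add: decseq_def pow_antimono assms)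
  have M: "M \<le> e"
    unfolding M_def using INF_lower[of 0 UNIV "pow a"] by simp
  have pow_in: "\<forall>\<^sub>F m in sequentially. pow a m \<in> {..e}"
    using assms by (simp add: pow_le_unit)
  have "(\<lambda>m. f (pow a m) a) \<longlonglongrightarrow> f M a"
    by (rule continuous_on_tendsto_compose[OF _ lim _ pow_in])
      (use assms M in \<open>auto intro!: continuous_on_mult continuous_intros\<close>)
  moreover have "(\<lambda>m. f (pow a m) a) \<longlonglongrightarrow> M"
    using LIMSEQ_Suc[OF lim] pow_Suc_right[OF assms] by simp
  ultimately have "f M a = M"
    by (rule LIMSEQ_unique)
  then have fixed: "f M (pow a m) = M" for m
    by (induction m) (auto simp: right_unit[OF M] simp flip: assoc)
  have "(\<lambda>m. f M (pow a m)) \<longlonglongrightarrow> f M M"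
    by (rule continuous_on_tendsto_compose[OF _ lim _ pow_in])
      (use M in \<open>auto intro!: continuous_on_mult continuous_intros\<close>)
  then show ?thesis
    unfolding fixed M_def[symmetric] by (simp add: LIMSEQ_const_iff)
qed

lemma least_idempotent_above:
  assumes "x \<le> e"
  obtains b where "x \<le> b" "b \<le> e" "f b b = b" "\<And>i. x \<le> i \<Longrightarrow> i \<le> e \<Longrightarrow> f i i = i \<Longrightarrow> b \<le> i"
proof -
  define I where "I = {x..e} \<inter> (\<lambda>i. (f i i, i)) -` {p. \<exists>z. p = (z, z)}"
  have "closed I"
    unfolding I_def
    by (rule continuous_closed_preimage)
      (auto intro!: continuous_on_Pair continuous_on_mult continuous_intros closed_diagonal
        intro: continuous_on_subset)
  moreover have "e \<in> I"
    using assms by (simp add: I_def)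
  ultimately have "Inf I \<in> I"
    using closed_contains_Inf_cl by blast
  moreover have "Inf I \<le> i" if "x \<le> i" "i \<le> e" "f i i = i" for i
    using that by (intro Inf_lower) (simp add: I_def)
  ultimately show ?thesis
    by (intro that[of "Inf I"]) (auto simp: I_def)
qed

lemma exists_root:
  assumes "x \<le> b" "b \<le> e" "f b b = b"
  obtains r where "x \<le> r" "r \<le> b" "pow r (Suc n) = x"
proof -
  have "pow x (Suc n) \<le> x"
    using pow_antimono[of x 1 "Suc n"] pow_one[of x] assms by simp
  moreover have "x \<le> pow b (Suc n)"
    using pow_idempotent assms by simp
  moreover have "continuous_on {x..b} (\<lambda>z. pow z (Suc n))"
    using assms by (intro continuous_on_subset[OF continuous_on_pow]) auto
  ultimately show ?thesis
    using IVT'[of "\<lambda>z. pow z (Suc n)" x x b] assms that by blast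
qed

lemma roots_tendsto_least_idempotent:
  assumes r: "\<And>n. x \<le> r n" "\<And>n. r n \<le> b" "\<And>n. pow (r n) (Suc n) = x"
    and "b \<le> e"
    and least: "\<And>i. x \<le> i \<Longrightarrow> i \<le> e \<Longrightarrow> f i i = i \<Longrightarrow> b \<le> i"
  shows "r \<longlonglongrightarrow> b"
proof (rule order_tendstoI)
  fix a
  assume "b < a"
  then show "\<forall>\<^sub>F n in sequentially. r n < a"
    by (intro always_eventually allI) (rule le_less_trans[OF r(2)])
next
  fix a
  assume "a < b"
  show "\<forall>\<^sub>F n in sequentially. a < r n"
  proof (cases "a < x")
    case True
    then show ?thesis
      by (intro always_eventually allI) (rule less_le_trans[OF _ r(1)])
  next
    case False
    have a: "x \<le> a" "a \<le> e"
      using False \<open>a < b\<close> \<open>b \<le> e\<close> by auto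
    \<comment> \<open>The powers of \<open>a\<close> decrease to an idempotent below \<open>a < b\<close>, which cannot lie above \<open>x\<close>.\<close>
    have "\<not> x \<le> (INF m. pow a m)"
    proof
      assume "x \<le> (INF m. pow a m)"
      moreover have "(INF m. pow a m) \<le> a"
        using INF_lower[of 1 UNIV "pow a"] pow_one[OF a(2)] by simp
      ultimately have "b \<le> (INF m. pow a m)"
        using least idempotent_INF_pow[OF a(2)] a by auto
      with \<open>(INF m. pow a m) \<le> a\<close> \<open>a < b\<close> show False
        by simp
    qed
    then obtain m where m: "pow a m < x"
      by (auto simp: le_INF_iff not_le)
    have "a < r n" if "m \<le> n" for n
    proof (rule ccontr)
      assume "\<not> a < r n"
      have "r n \<le> e"
        using r(2) \<open>b \<le> e\<close> order_trans by blast
      have "x = pow (r n) (Suc n)"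
        using r(3) by simp
      also have "\<dots> \<le> pow (r n) m"
        by (rule pow_antimono[OF \<open>r n \<le> e\<close>]) (use that in simp)
      also have "\<dots> \<le> pow a m"
        using \<open>\<not> a < r n\<close> by (intro pow_mono) simp
      finally show False
        using m by simp
    qed
    then show ?thesis
      unfolding eventually_sequentially by blast
  qed
qed

lemma products_squeezed_by_power:
  assumes "r \<le> e" "y \<le> e" and x: "x = pow r (Suc n)" "x \<le> y"
  obtains z where "f x y \<le> z" "f y x \<le> z" "f z r \<le> f x y" "f z r \<le> f y x"
proof -
  \<comment> \<open>The witness is \<open>f x (pow r k)\<close> for the \<open>k\<close> with \<open>pow r (Suc k) \<le> y \<le> pow r k\<close>.\<close>
  define k where "k = (LEAST k. pow r (Suc k) \<le> y)"
  have k: "pow r (Suc k) \<le> y"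
    unfolding k_def by (rule LeastI[of _ n]) (use x in simp)
  have "y \<le> pow r k"
  proof (cases k)
    case (Suc j)
    then have "\<not> pow r (Suc j) \<le> y"
      using not_less_Least[of j "\<lambda>k. pow r (Suc k) \<le> y"] k_def by simp
    then show ?thesis
      using Suc by simp
  qed (use assms in simp)
  define w where "w = pow r k"
  have comm: "f w x = f x w" "f r x = f x r"
    using pow_commute[of r k "Suc n"] pow_Suc_right[OF assms(1), of "Suc n"]
    by (simp_all add: x w_def)
  have wr: "f w r = pow r (Suc k)"
    unfolding w_def using pow_Suc_right[OF assms(1)] by simp
  show ?thesis
  proof (rule that[of "f x w"])
    show "f x y \<le> f x w"
      using \<open>y \<le> pow r k\<close> by (intro mono) (simp_all add: w_def)
    have "f y x \<le> f w x"
      using \<open>y \<le> pow r k\<close> by (intro mono) (simp_all add: w_def)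
    then show "f y x \<le> f x w"
      by (simp add: comm(1))
    have "f (f x w) r = f x (pow r (Suc k))"
      by (simp add: assoc wr)
    also have "\<dots> \<le> f x y"
      using k by (intro mono) auto
    finally show "f (f x w) r \<le> f x y" .
    have "f (f x w) r = f (pow r (Suc k)) x"
      by (metis assoc comm wr)
    also have "\<dots> \<le> f y x"
      using k by (intro mono) auto
    finally show "f (f x w) r \<le> f y x" .
  qed
qed

lemma commute_of_le:
  assumes "x \<le> y" "y \<le> e"
  shows "f x y = f y x"
proof -
  have "x \<le> e"
    using assms by simp
  then obtain b where b: "x \<le> b" "b \<le> e" "f b b = b"
    and least: "\<And>i. x \<le> i \<Longrightarrow> i \<le> e \<Longrightarrow> f i i = i \<Longrightarrow> b \<le> i"
    using least_idempotent_above by blast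
  show ?thesis
  proof (cases "b \<le> y")
    case True
    then show ?thesis
      using mult_through_idempotent[OF b(1) True assms(2) b(3)] by simp
  next
    case False
    have "\<exists>r. x \<le> r \<and> r \<le> b \<and> pow r (Suc n) = x" for n
      using exists_root[OF b, of n] by blast
    then obtain r where r: "\<And>n. x \<le> r n" "\<And>n. r n \<le> b" "\<And>n. pow (r n) (Suc n) = x"
      by metis
    have r_le: "r n \<le> e" for n
      using r(2) b(2) by (rule order_trans)
    show ?thesis
    proof (rule ccontr)
      assume "f x y \<noteq> f y x"
      define lo where "lo = min (f x y) (f y x)"
      define hi where "hi = max (f x y) (f y x)"
      have "lo < hi"
        using \<open>f x y \<noteq> f y x\<close> by (auto simp: lo_def hi_def min_def max_def)
      have "hi \<le> x"
        using mult_le_left[of x y] mult_le_right[of y x] assms by (auto simp: hi_def)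
      then have "hi \<le> b" "hi \<le> e"
        using b by auto
      have "continuous_on {..e} (\<lambda>t. f hi t)"
        using \<open>hi \<le> e\<close> by (auto intro!: continuous_on_mult continuous_intros)
      then have "(\<lambda>n. f hi (r n)) \<longlonglongrightarrow> f hi b"
        by (rule continuous_on_tendsto_compose[OF _ roots_tendsto_least_idempotent[OF r b(2) least]])
          (use b(2) r_le in auto)
      moreover have "f hi b = hi"
        using idempotent_absorbs_below(2)[OF b(2,3) \<open>hi \<le> b\<close>] .
      ultimately have "\<forall>\<^sub>F n in sequentially. lo < f hi (r n)"
        using \<open>lo < hi\<close> order_tendstoD(1) by metis
      then obtain N where N: "lo < f hi (r N)"
        by (auto simp: eventually_sequentially)
      obtain z where z: "f x y \<le> z" "f y x \<le> z" "f z (r N) \<le> f x y" "f z (r N) \<le> f y x"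
        using products_squeezed_by_power[OF r_le assms(2) r(3)[symmetric] assms(1)] .
      then have "f hi (r N) \<le> f z (r N)"
        by (intro mono) (auto simp: hi_def)
      also have "\<dots> \<le> lo"
        using z by (simp add: lo_def)
      finally show False
        using N by simp
    qed
  qed
qed

lemma commute: "a \<le> e \<Longrightarrow> b \<le> e \<Longrightarrow> f a b = f b a"
  using commute_of_le[of a b] commute_of_le[of b a] by (cases "a \<le> b") auto

end

theorem lemma2p7:
  fixes f :: "ennreal \<Rightarrow> ennreal \<Rightarrow> ennreal" and e :: ennreal
  assumes "pseudo_mult f e"
  shows "non_degenerate f e \<longleftrightarrow> (\<forall>a\<in>{0..e}. \<forall>b\<in>{0..e}. f a b = f b a)"
proof
  assume "non_degenerate f e"
  then interpret nondegenerate_pseudo_multiplication f e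
    using assms by unfold_locales (simp_all add: non_degenerate_def)
  show "\<forall>a\<in>{0..e}. \<forall>b\<in>{0..e}. f a b = f b a"
    using commute by simp
next
  interpret pseudo_multiplication f e
    using assms by unfold_locales
  assume "\<forall>a\<in>{0..e}. \<forall>b\<in>{0..e}. f a b = f b a"
  then show "non_degenerate f e"
    unfolding non_degenerate_def by (rule non_degenerate_if_commutative)
qed

end
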